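(* Let $\mathbf{v}(\mathbf{x},t)$ be a smooth velocity field on a domain in $\mathbb{R}^3$, let $\mathbf{x}(t)$, $t\in[t_0,t_1]$, be a trajectory ($\dot{\mathbf{x}}=\mathbf{v}(\mathbf{x},t)$), and for $\tau,t\in[t_0,t_1]$ let $\mathbf{F}_\tau^t$ be the deformation gradient along it, i.e. the solution of $\dot{\mathbf{F}}_\tau^t=\nabla\mathbf{v}(\mathbf{x}(t),t)\mathbf{F}_\tau^t$, $\mathbf{F}_\tau^\tau=\mathbf{I}$. Then: (i) $\mathbf{F}_\tau^t$ admits a unique decomposition $\mathbf{F}_\tau^t=\mathbf{O}_\tau^t\mathbf{M}_\tau^t=\mathbf{N}_\tau^t\mathbf{O}_\tau^t$ in which $\mathbf{O}_\tau^t$ is a rotational linear process, $\mathbf{M}_\tau^t$ is an irrotational family, and $(\mathbf{N}_\tau^t)^T$ is irrotational as a function of $\tau$ (i.e. $[\frac{d}{d\tau}(\mathbf{N}_\tau^t)^T][(\mathbf{N}_\tau^t)^T]^{-1}$ is symmetric). (ii) $\mathbf{M}_\tau^t$ and $\mathbf{N}_\tau^t=(\mathbf{M}_t^\tau)^{-1}$ are nonsingular, have the same singular values as $\mathbf{F}_\tau^t$, and satisfy $(\mathbf{M}_\tau^t)^T\mathbf{M}_\tau^t=(\mathbf{F}_\tau^t)^T\mathbf{F}_\tau^t$ and $\mathbf{N}_\tau^t(\mathbf{N}_\tau^t)^T=\mathbf{F}_\tau^t(\mathbf{F}_\tau^t)^T$ (so they share the principal strain values and axes of the polar stretch tensors).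 (iii) The factors are the unique solutions of $$\dot{\mathbf{O}}_\tau^t=\mathbf{W}(\mathbf{x}(t),t)\mathbf{O}_\tau^t,\ \mathbf{O}_\tau^\tau=\mathbf{I};\qquad \dot{\mathbf{M}}_\tau^t=\big[\mathbf{O}_t^\tau\mathbf{D}(\mathbf{x}(t),t)\mathbf{O}_\tau^t\big]\mathbf{M}_\tau^t,\ \mathbf{M}_\tau^\tau=\mathbf{I};$$ $$\frac{d}{d\tau}(\mathbf{N}_\tau^t)^T=-\big[\mathbf{O}_\tau^t\mathbf{D}(\mathbf{x}(\tau),\tau)\mathbf{O}_t^\tau\big](\mathbf{N}_\tau^t)^T,\ (\mathbf{N}_t^t)^T=\mathbf{I}.$$
   Context: $\mathbf{W}=\frac12[\nabla\mathbf{v}-(\nabla\mathbf{v})^T]$ (spin tensor) and $\mathbf{D}=\frac12[\nabla\mathbf{v}+(\nabla\mathbf{v})^T]$ (rate-of-strain tensor). A linear process is a $C^1$ two-parameter family $\mathbf{T}_\tau^t$ of linear maps with $\mathbf{T}_t^t=\mathbf{I}$ and $\mathbf{T}_\tau^t=\mathbf{T}_s^t\mathbf{T}_\tau^s$ for all $\tau,s,t$. A smooth two-parameter family $\mathbf{T}_\tau^t$ is rotational if $\dot{\mathbf{T}}_\tau^t(\mathbf{T}_\tau^t)^{-1}$ is skew-symmetric for all $\tau,t$ (equivalently $\mathbf{T}_\tau^t\in SO(3)$), and irrotational if $\dot{\mathbf{T}}_\tau^t(\mathbf{T}_\tau^t)^{-1}$ is symmetric for all $\tau,t$; the dot denotes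 $\partial/\partial t$. Also $\mathbf{O}_t^\tau=(\mathbf{O}_\tau^t)^{-1}=(\mathbf{O}_\tau^t)^T$. *)

theory Defs
  imports "HOL-Analysis.Analysis"
begin

type_synonym mat3 = "real^3^3"

text \<open>Two-parameter families T tau t of 3x3 matrices, considered for tau, t in an interval I.
  The dot denotes the partial derivative in the second (upper) parameter t.\<close>

definition dt :: "real set \<Rightarrow> (real \<Rightarrow> real \<Rightarrow> mat3) \<Rightarrow> real \<Rightarrow> real \<Rightarrow> mat3" where
  "dt I T \<tau> t = vector_derivative (\<lambda>s. T \<tau> s) (at t within I)"

definition dtau :: "real set \<Rightarrow> (real \<Rightarrow> real \<Rightarrow> mat3) \<Rightarrow> real \<Rightarrow> real \<Rightarrow> mat3" where
  "dtau I T \<tau> t = vector_derivative (\<lambda>s. T s t) (at \<tau> within I)"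

definition skew_sym :: "mat3 \<Rightarrow> bool" where
  "skew_sym A \<longleftrightarrow> transpose A = - A"

definition sym_mat :: "mat3 \<Rightarrow> bool" where
  "sym_mat A \<longleftrightarrow> transpose A = A"

definition C1_family :: "real set \<Rightarrow> (real \<Rightarrow> real \<Rightarrow> mat3) \<Rightarrow> bool" where
  "C1_family I T \<longleftrightarrow>
     (\<forall>\<tau>\<in>I. \<forall>t\<in>I. ((\<lambda>s. T \<tau> s) has_vector_derivative dt I T \<tau> t) (at t within I)
                   \<and> ((\<lambda>s. T s t) has_vector_derivative dtau I T \<tau> t) (at \<tau> within I))
   \<and> continuous_on (I \<times> I) (\<lambda>(\<tau>, t). dt I T \<tau> t)
   \<and> continuous_on (I \<times> I) (\<lambda>(\<tau>, t). dtau I T \<tau> t)"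

definition linear_process :: "real set \<Rightarrow> (real \<Rightarrow> real \<Rightarrow> mat3) \<Rightarrow> bool" where
  "linear_process I T \<longleftrightarrow> C1_family I T
     \<and> (\<forall>t\<in>I. T t t = mat 1)
     \<and> (\<forall>\<tau>\<in>I. \<forall>s\<in>I. \<forall>t\<in>I. T \<tau> t = T s t ** T \<tau> s)"

definition rotational :: "real set \<Rightarrow> (real \<Rightarrow> real \<Rightarrow> mat3) \<Rightarrow> bool" where
  "rotational I T \<longleftrightarrow> C1_family I T \<and>
     (\<forall>\<tau>\<in>I. \<forall>t\<in>I. invertible (T \<tau> t) \<and> skew_sym (dt I T \<tau> t ** matrix_inv (T \<tau> t)))"

definition irrotational :: "real set \<Rightarrow> (real \<Rightarrow> real \<Rightarrow> mat3) \<Rightarrow> bool" where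
  "irrotational I T \<longleftrightarrow> C1_family I T \<and>
     (\<forall>\<tau>\<in>I. \<forall>t\<in>I. invertible (T \<tau> t) \<and> sym_mat (dt I T \<tau> t ** matrix_inv (T \<tau> t)))"

definition irrotational_tau :: "real set \<Rightarrow> (real \<Rightarrow> real \<Rightarrow> mat3) \<Rightarrow> bool" where
  "irrotational_tau I T \<longleftrightarrow> C1_family I T \<and>
     (\<forall>\<tau>\<in>I. \<forall>t\<in>I. invertible (T \<tau> t) \<and> sym_mat (dtau I T \<tau> t ** matrix_inv (T \<tau> t)))"

text \<open>Singular values with multiplicity: multiplicity of sigma >= 0 is the dimension of the
  eigenspace of the symmetric matrix A^T A for eigenvalue sigma^2.\<close>
definition sv_mult :: "mat3 \<Rightarrow> real \<Rightarrow> nat" where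
  "sv_mult A \<sigma> = (if \<sigma> \<ge> 0 then dim {v. (transpose A ** A) *v v = (\<sigma>^2) *\<^sub>R v} else 0)"

definition same_singular_values :: "mat3 \<Rightarrow> mat3 \<Rightarrow> bool" where
  "same_singular_values A B \<longleftrightarrow> sv_mult A = sv_mult B"

definition spin :: "mat3 \<Rightarrow> mat3" where
  "spin L = (1/2) *\<^sub>R (L - transpose L)"

definition strain_rate :: "mat3 \<Rightarrow> mat3" where
  "strain_rate L = (1/2) *\<^sub>R (L + transpose L)"

definition OMN_decomp :: "real set \<Rightarrow> (real \<Rightarrow> real \<Rightarrow> mat3) \<Rightarrow> (real \<Rightarrow> real \<Rightarrow> mat3)
    \<Rightarrow> (real \<Rightarrow> real \<Rightarrow> mat3) \<Rightarrow> (real \<Rightarrow> real \<Rightarrow> mat3) \<Rightarrow> bool" where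
  "OMN_decomp I F R M N \<longleftrightarrow>
     (\<forall>\<tau>\<in>I. \<forall>t\<in>I. F \<tau> t = R \<tau> t ** M \<tau> t \<and> F \<tau> t = N \<tau> t ** R \<tau> t)
   \<and> linear_process I R \<and> rotational I R
   \<and> irrotational I M
   \<and> irrotational_tau I (\<lambda>\<tau> t. transpose (N \<tau> t))"

end

theory Submission
  imports Defs
begin

text \<open>The deformation gradient F is the propagator of the velocity gradient L = W + D along the
  trajectory. Let O be the propagator of the spin W; as W is skew, O is a rotation. Then
  M = O^T F and N = F O^T satisfy F = O M = N O, and differentiating in the rotating frame
  gives M' = (O^T D O) M and, in the lower parameter, (N^T)' = -(O D O^T) N^T, both with
  symmetric coefficients. Conversely, differentiating F = O M for rotational O and irrotational M
  splits L into the symmetric part O (M' M^-1) O^T and the skew part O' O^-1, so O' O^-1 = W and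
  O is the propagator of W. Everything rests on existence (by Picard iteration) and uniqueness
  of solutions of linear matrix equations X' = C X.\<close>

lemma bilinear_matrix_matrix_mult: "bilinear ((**) :: real^'n^'m \<Rightarrow> real^'p^'n \<Rightarrow> real^'p^'m)"
  unfolding bilinear_def
  by (auto intro!: linearI simp: matrix_add_ldistrib scalar_matrix_assoc matrix_scalar_ac)
     (vector matrix_matrix_mult_def sum.distrib field_simps)

lemma bounded_bilinear_matrix_matrix_mult:
  "bounded_bilinear ((**) :: real^'n^'m \<Rightarrow> real^'p^'n \<Rightarrow> real^'p^'m)"
  using bilinear_conv_bounded_bilinear bilinear_matrix_matrix_mult by blast

lemma bounded_linear_transpose: "bounded_linear (transpose :: real^'n^'m \<Rightarrow> real^'m^'n)"
  by (simp add: linear_conv_bounded_linear[symmetric]) (rule linearI; vector transpose_def)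

lemmas matrix_add_rdistrib = bounded_bilinear.add_left[OF bounded_bilinear_matrix_matrix_mult]
lemmas matrix_diff_ldistrib = bounded_bilinear.diff_right[OF bounded_bilinear_matrix_matrix_mult]
lemmas matrix_diff_rdistrib = bounded_bilinear.diff_left[OF bounded_bilinear_matrix_matrix_mult]
lemmas matrix_mul_lneg = bounded_bilinear.minus_left[OF bounded_bilinear_matrix_matrix_mult]
lemmas matrix_mul_rneg = bounded_bilinear.minus_right[OF bounded_bilinear_matrix_matrix_mult]
lemmas matrix_mul_lzero [simp] = bounded_bilinear.zero_left[OF bounded_bilinear_matrix_matrix_mult]
lemmas matrix_mul_rzero [simp] = bounded_bilinear.zero_right[OF bounded_bilinear_matrix_matrix_mult]
lemmas transpose_add = linear_add[OF bounded_linear.linear[OF bounded_linear_transpose]]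
lemmas transpose_diff = linear_diff[OF bounded_linear.linear[OF bounded_linear_transpose]]
lemmas transpose_minus = linear_neg[OF bounded_linear.linear[OF bounded_linear_transpose]]

lemmas continuous_on_matrix_mult[continuous_intros] =
  bounded_bilinear.continuous_on[OF bounded_bilinear_matrix_matrix_mult]
lemmas continuous_on_transpose[continuous_intros] =
  bounded_linear.continuous_on[OF bounded_linear_transpose]
lemmas has_vector_derivative_matrix_mult =
  bounded_bilinear.has_vector_derivative[OF bounded_bilinear_matrix_matrix_mult]
lemmas has_vector_derivative_transpose =
  bounded_linear.has_vector_derivative[OF bounded_linear_transpose]

lemma continuous_on_product_fst: "continuous_on A f \<Longrightarrow> continuous_on (A \<times> B) (\<lambda>p. f (fst p))"
  by (rule continuous_on_compose2[OF _ continuous_on_fst]) auto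

lemma continuous_on_product_snd: "continuous_on B f \<Longrightarrow> continuous_on (A \<times> B) (\<lambda>p. f (snd p))"
  by (rule continuous_on_compose2[OF _ continuous_on_snd]) auto

section \<open>Linear matrix differential equations\<close>

lemma continuous_on_matrix_mult_bound:
  fixes C :: "real \<Rightarrow> real^'n^'n"
  assumes "continuous_on {a..b} C"
  obtains K where "K > 0" "\<And>s (X::real^'n^'n). s \<in> {a..b} \<Longrightarrow> norm (C s ** X) \<le> K * norm X"
proof -
  obtain K0 where K0: "K0 > 0" "\<And>X Y. norm ((X::real^'n^'n) ** (Y::real^'n^'n)) \<le> norm X * norm Y * K0"
    using bounded_bilinear.pos_bounded[OF bounded_bilinear_matrix_matrix_mult] by blast
  obtain B where B: "\<And>s. s \<in> {a..b} \<Longrightarrow> norm (C s) \<le> B"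
    using compact_imp_bounded[OF compact_continuous_image[OF assms compact_Icc]]
    by (meson bounded_iff imageI)
  have "norm (C s ** X) \<le> ((\<bar>B\<bar> + 1) * K0) * norm X"
    if "s \<in> {a..b}" for s and X :: "real^'n^'n"
  proof -
    have "norm (C s ** X) \<le> (norm (C s) * K0) * norm X"
      using K0(2)[of "C s" X] by (simp add: ac_simps)
    also have "\<dots> \<le> ((\<bar>B\<bar> + 1) * K0) * norm X"
      using B[OF that] K0(1) by (intro mult_right_mono) auto
    finally show ?thesis .
  qed
  moreover have "(\<bar>B\<bar> + 1) * K0 > 0" using K0(1) by (intro mult_pos_pos) auto
  ultimately show ?thesis using that by blast
qed

fun picard :: "(real \<Rightarrow> real^'n^'n) \<Rightarrow> real \<Rightarrow> nat \<Rightarrow> real \<Rightarrow> real^'n^'n" where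
  "picard C a 0 t = mat 1"
| "picard C a (Suc n) t = mat 1 + integral {a..t} (\<lambda>s. C s ** picard C a n s)"

lemma continuous_on_picard:
  assumes "continuous_on {a..b} C"
  shows "continuous_on {a..b} (picard C a n)"
proof (induction n)
  case (Suc n)
  have "(\<lambda>s. C s ** picard C a n s) integrable_on {a..b}"
    by (intro integrable_continuous_real continuous_on_matrix_mult assms Suc)
  then show ?case
    by (simp only: picard.simps) (intro continuous_intros indefinite_integral_continuous_1)
qed simp

lemma has_integral_exp_term:
  fixes K c a t :: real
  assumes "a \<le> t"
  shows "((\<lambda>s. K * (c * (K * (s - a)) ^ m / fact m)) has_integral
           c * (K * (t - a)) ^ Suc m / fact (Suc m)) {a..t}"
proof -
  have "((\<lambda>s. c * (K * (s - a)) ^ Suc m / fact (Suc m)) has_real_derivative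
          K * (c * (K * (s - a)) ^ m / fact m)) (at s within {a..t})" for s
    by (rule derivative_eq_intros refl | simp)+
  from fundamental_theorem_of_calculus[OF assms,
      OF this[unfolded has_real_derivative_iff_has_vector_derivative]]
  show ?thesis by simp
qed

lemma norm_integral_matrix_mult_le_exp_term:
  fixes C Y :: "real \<Rightarrow> real^'n^'n"
  assumes C: "continuous_on {a..b} C" and Y: "continuous_on {a..b} Y"
    and K: "K > 0" "\<And>s (X::real^'n^'n). s \<in> {a..b} \<Longrightarrow> norm (C s ** X) \<le> K * norm X"
    and t: "t \<in> {a..b}"
    and Y_le: "\<And>s. s \<in> {a..t} \<Longrightarrow> norm (Y s) \<le> c * (K * (s - a)) ^ m / fact m"
  shows "norm (integral {a..t} (\<lambda>s. C s ** Y s)) \<le> c * (K * (t - a)) ^ Suc m / fact (Suc m)"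
proof -
  have sub: "{a..t} \<subseteq> {a..b}" using t by auto
  have "norm (integral {a..t} (\<lambda>s. C s ** Y s))
      \<le> integral {a..t} (\<lambda>s. K * (c * (K * (s - a)) ^ m / fact m))"
  proof (rule integral_norm_bound_integral)
    show "(\<lambda>s. C s ** Y s) integrable_on {a..t}"
      by (intro integrable_continuous_real continuous_on_subset[OF continuous_on_matrix_mult[OF C Y] sub])
    show "(\<lambda>s. K * (c * (K * (s - a)) ^ m / fact m)) integrable_on {a..t}"
      by (intro integrable_continuous_real continuous_intros) auto
    fix s assume "s \<in> {a..t}"
    then show "norm (C s ** Y s) \<le> K * (c * (K * (s - a)) ^ m / fact m)"
      using order_trans[OF K(2) mult_left_mono[OF Y_le]] K(1) sub by auto
  qed
  also have "\<dots> = c * (K * (t - a)) ^ Suc m / fact (Suc m)"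
    using t by (intro integral_unique[OF has_integral_exp_term]) auto
  finally show ?thesis .
qed

lemma picard_Suc_diff:
  fixes C :: "real \<Rightarrow> real^'n^'n"
  assumes C: "continuous_on {a..b} C" and t: "t \<in> {a..b}"
  shows "picard C a (Suc (Suc n)) t - picard C a (Suc n) t
           = integral {a..t} (\<lambda>s. C s ** (picard C a (Suc n) s - picard C a n s))"
proof -
  have "(\<lambda>s. C s ** picard C a m s) integrable_on {a..t}" for m
    using t by (intro integrable_continuous_real continuous_on_subset[OF
        continuous_on_matrix_mult[OF C continuous_on_picard[OF C]]]) auto
  then have "integral {a..t} (\<lambda>s. C s ** picard C a (Suc n) s)
        - integral {a..t} (\<lambda>s. C s ** picard C a n s)
      = integral {a..t} (\<lambda>s. C s ** (picard C a (Suc n) s - picard C a n s))"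
    by (simp add: integral_diff[symmetric] matrix_diff_ldistrib del: picard.simps)
  then show ?thesis
    by (simp only: picard.simps(2)[of C a "Suc n" t] picard.simps(2)[of C a n t]) simp
qed

lemma picard_step_bound:
  fixes C :: "real \<Rightarrow> real^'n^'n"
  assumes C: "continuous_on {a..b} C"
    and K: "K > 0" "\<And>s (X::real^'n^'n). s \<in> {a..b} \<Longrightarrow> norm (C s ** X) \<le> K * norm X"
    and t: "t \<in> {a..b}"
  shows "norm (picard C a (Suc n) t - picard C a n t)
           \<le> norm (mat 1 :: real^'n^'n) * (K * (t - a)) ^ Suc n / fact (Suc n)"
  using t
proof (induction n arbitrary: t)
  case 0
  then show ?case
    using norm_integral_matrix_mult_le_exp_term[OF C continuous_on_const[of _ "mat 1"] K 0,
        where c = "norm (mat 1 :: real^'n^'n)" and m = 0]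
    by simp
next
  case (Suc n)
  have cont: "continuous_on {a..b} (\<lambda>s. picard C a (Suc n) s - picard C a n s)"
    by (intro continuous_intros continuous_on_picard C)
  have le: "norm (picard C a (Suc n) s - picard C a n s)
      \<le> norm (mat 1 :: real^'n^'n) * (K * (s - a)) ^ Suc n / fact (Suc n)" if "s \<in> {a..t}" for s
    using Suc.IH[of s] that Suc.prems by auto
  show ?case
    unfolding picard_Suc_diff[OF C Suc.prems]
    using norm_integral_matrix_mult_le_exp_term[OF C cont K Suc.prems le] by simp
qed

lemma picard_uniform_limit:
  fixes C :: "real \<Rightarrow> real^'n^'n"
  assumes C: "continuous_on {a..b} C"
  obtains \<Phi> where "uniform_limit {a..b} (picard C a) \<Phi> sequentially"
proof -
  obtain K where K: "K > 0" "\<And>s (X::real^'n^'n). s \<in> {a..b} \<Longrightarrow> norm (C s ** X) \<le> K * norm X"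
    using continuous_on_matrix_mult_bound[OF C] by blast
  define c where "c = norm (mat 1 :: real^'n^'n)"
  define d where "d n t = picard C a (Suc n) t - picard C a n t" for n t
  have telescope: "picard C a n t = mat 1 + (\<Sum>i<n. d i t)" for n t
    by (induction n) (simp, simp add: d_def del: picard.simps)
  have d_bound: "norm (d n t) \<le> c * (K * (b - a)) ^ Suc n / fact (Suc n)" if "t \<in> {a..b}" for n t
  proof -
    have "(K * (t - a)) ^ Suc n \<le> (K * (b - a)) ^ Suc n"
      using that K(1) by (intro power_mono mult_left_mono) auto
    then show ?thesis
      using picard_step_bound[OF C K that, of n] divide_right_mono mult_left_mono
      unfolding c_def d_def by (smt (verit) fact_gt_zero norm_ge_zero)
  qed
  have "summable (\<lambda>n. (K * (b - a)) ^ Suc n / fact (Suc n))"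
    using summable_exp_generic[of "K * (b - a)"]
    by (subst summable_Suc_iff) (simp add: divide_inverse mult.commute)
  from summable_mult[OF this, of c]
  have "summable (\<lambda>n. c * (K * (b - a)) ^ Suc n / fact (Suc n))"
    by (simp add: times_divide_eq_right del: fact_Suc power_Suc)
  from Weierstrass_m_test[OF d_bound this]
  have "uniform_limit {a..b} (\<lambda>n t. mat 1 + (\<Sum>i<n. d i t)) (\<lambda>t. mat 1 + (\<Sum>i. d i t)) sequentially"
    by (intro uniform_limit_intros)
  then show ?thesis using that unfolding telescope[symmetric] by blast
qed

lemma picard_limit_integral_equation:
  fixes C :: "real \<Rightarrow> real^'n^'n"
  assumes C: "continuous_on {a..b} C"
    and lim: "uniform_limit {a..b} (picard C a) \<Phi> sequentially"
    and t: "t \<in> {a..b}"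
  shows "\<Phi> t = mat 1 + integral {a..t} (\<lambda>s. C s ** \<Phi> s)"
proof -
  have sub: "{a..t} \<subseteq> {a..b}" using t by auto
  have cont: "continuous_on {a..t} (picard C a n)" for n
    using continuous_on_subset[OF continuous_on_picard[OF C] sub] .
  have lim_t: "uniform_limit {a..t} (picard C a) \<Phi> sequentially"
    using uniform_limit_on_subset[OF lim sub] .
  have "continuous_on {a..t} \<Phi>"
    by (rule uniform_limit_theorem[OF _ lim_t]) (auto intro!: always_eventually cont)
  then have "uniform_limit {a..t} (\<lambda>n s. C s ** picard C a n s) (\<lambda>s. C s ** \<Phi> s) sequentially"
    using continuous_on_subset[OF C sub] compact_Icc
    by (intro bounded_bilinear.bounded_uniform_limit[OF bounded_bilinear_matrix_matrix_mult]
          uniform_limit_const lim_t compact_imp_bounded compact_continuous_image)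
  then obtain In J where In: "\<And>n. ((\<lambda>s. C s ** picard C a n s) has_integral In n) {a..t}"
    and J: "((\<lambda>s. C s ** \<Phi> s) has_integral J) {a..t}" and In_J: "In \<longlonglongrightarrow> J"
    by (rule uniform_limit_integral)
       (auto intro!: continuous_on_matrix_mult continuous_on_subset[OF C sub] cont)
  have "picard C a (Suc n) t = mat 1 + In n" for n
    using In[of n] by (simp add: integral_unique)
  then have "(\<lambda>n. picard C a (Suc n) t) \<longlonglongrightarrow> mat 1 + J"
    using tendsto_add[OF tendsto_const In_J] by simp
  moreover have "(\<lambda>n. picard C a (Suc n) t) \<longlonglongrightarrow> \<Phi> t"
    using LIMSEQ_Suc[OF tendsto_uniform_limitI[OF lim t]] .
  ultimately show ?thesis using J LIMSEQ_unique by (metis integral_unique)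
qed

lemma matrix_ode_solution_exists:
  fixes C :: "real \<Rightarrow> real^'n^'n"
  assumes ab: "a \<le> b" and C: "continuous_on {a..b} C"
  obtains \<Phi> where "\<Phi> a = mat 1"
    "\<And>t. t \<in> {a..b} \<Longrightarrow> (\<Phi> has_vector_derivative C t ** \<Phi> t) (at t within {a..b})"
proof -
  obtain \<Phi> where lim: "uniform_limit {a..b} (picard C a) \<Phi> sequentially"
    using picard_uniform_limit[OF C] by blast
  note eq = picard_limit_integral_equation[OF C lim]
  have "continuous_on {a..b} \<Phi>"
    by (rule uniform_limit_theorem[OF _ lim]) (auto intro!: always_eventually continuous_on_picard C)
  then have rhs: "((\<lambda>t. mat 1 + integral {a..t} (\<lambda>s. C s ** \<Phi> s)) has_vector_derivative C t ** \<Phi> t)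
               (at t within {a..b})" if "t \<in> {a..b}" for t
    using integral_has_vector_derivative[OF continuous_on_matrix_mult[OF C] that]
    by (intro derivative_eq_intros) auto
  have "(\<Phi> has_vector_derivative C t ** \<Phi> t) (at t within {a..b})" if "t \<in> {a..b}" for t
    by (rule has_vector_derivative_transform[OF that _ rhs[OF that]]) (rule eq)
  with that eq[of a] ab show ?thesis by simp
qed

lemma matrix_ode_left_solution_exists:
  fixes C :: "real \<Rightarrow> real^'n^'n"
  assumes ab: "a \<le> b" and C: "continuous_on {a..b} C"
  obtains \<Psi> where "\<Psi> a = mat 1"
    "\<And>t. t \<in> {a..b} \<Longrightarrow> (\<Psi> has_vector_derivative - (\<Psi> t ** C t)) (at t within {a..b})"
proof -
  have "continuous_on {a..b} (\<lambda>t. - transpose (C t))" by (intro continuous_intros C)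
  then obtain Z where Z: "Z a = mat 1"
    "\<And>t. t \<in> {a..b} \<Longrightarrow> (Z has_vector_derivative (- transpose (C t)) ** Z t) (at t within {a..b})"
    using matrix_ode_solution_exists[OF ab] by blast
  have "((\<lambda>t. transpose (Z t)) has_vector_derivative - (transpose (Z t) ** C t)) (at t within {a..b})"
    if "t \<in> {a..b}" for t
    using has_vector_derivative_transpose[OF Z(2)[OF that]]
    by (simp add: matrix_transpose_mul transpose_minus matrix_mul_rneg)
  with Z(1) show ?thesis by (intro that[of "\<lambda>t. transpose (Z t)"]) simp_all
qed

lemma matrix_ode_adjoint_product_constant:
  fixes C \<Psi> Y :: "real \<Rightarrow> real^'n^'n"
  assumes \<Psi>: "\<And>t. t \<in> {a..b} \<Longrightarrow> (\<Psi> has_vector_derivative - (\<Psi> t ** C t)) (at t within {a..b})"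
    and Y: "\<And>t. t \<in> {a..b} \<Longrightarrow> (Y has_vector_derivative C t ** Y t) (at t within {a..b})"
    and "s \<in> {a..b}" "t \<in> {a..b}"
  shows "\<Psi> t ** Y t = \<Psi> s ** Y s"
proof -
  have "((\<lambda>t. \<Psi> t ** Y t) has_vector_derivative 0) (at r within {a..b})" if "r \<in> {a..b}" for r
    using has_vector_derivative_matrix_mult[OF \<Psi>[OF that] Y[OF that]]
    by (simp add: matrix_mul_lneg matrix_mul_assoc)
  then obtain c where "\<And>r. r \<in> {a..b} \<Longrightarrow> \<Psi> r ** Y r = c"
    using has_vector_derivative_zero_constant[OF convex_real_interval(5)] by blast
  with assms(3,4) show ?thesis by simp
qed

lemma fundamental_matrix_inverse:
  fixes C \<Phi> \<Psi> :: "real \<Rightarrow> real^'n^'n"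
  assumes "a \<le> b" and "\<Phi> a = mat 1" "\<Psi> a = mat 1"
    and \<Phi>: "\<And>t. t \<in> {a..b} \<Longrightarrow> (\<Phi> has_vector_derivative C t ** \<Phi> t) (at t within {a..b})"
    and \<Psi>: "\<And>t. t \<in> {a..b} \<Longrightarrow> (\<Psi> has_vector_derivative - (\<Psi> t ** C t)) (at t within {a..b})"
    and t: "t \<in> {a..b}"
  shows "\<Psi> t ** \<Phi> t = mat 1" "\<Phi> t ** \<Psi> t = mat 1"
proof -
  show "\<Psi> t ** \<Phi> t = mat 1"
    using matrix_ode_adjoint_product_constant[OF \<Psi> \<Phi> _ t, of a] assms(1-3) by simp
  then show "\<Phi> t ** \<Psi> t = mat 1"
    using matrix_left_right_inverse by blast
qed

lemma matrix_ode_solution_unique: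
  fixes C Y Z :: "real \<Rightarrow> real^'n^'n"
  assumes ab: "a \<le> b" and C: "continuous_on {a..b} C"
    and Y: "\<And>t. t \<in> {a..b} \<Longrightarrow> (Y has_vector_derivative C t ** Y t) (at t within {a..b})"
    and Z: "\<And>t. t \<in> {a..b} \<Longrightarrow> (Z has_vector_derivative C t ** Z t) (at t within {a..b})"
    and s: "s \<in> {a..b}" and YZ: "Y s = Z s" and t: "t \<in> {a..b}"
  shows "Y t = Z t"
proof -
  obtain \<Phi> :: "real \<Rightarrow> real^'n^'n" where \<Phi>: "\<Phi> a = mat 1"
    "\<And>t. t \<in> {a..b} \<Longrightarrow> (\<Phi> has_vector_derivative C t ** \<Phi> t) (at t within {a..b})"
    using matrix_ode_solution_exists[OF ab C] by blast
  obtain \<Psi> :: "real \<Rightarrow> real^'n^'n" where \<Psi>: "\<Psi> a = mat 1"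
    "\<And>t. t \<in> {a..b} \<Longrightarrow> (\<Psi> has_vector_derivative - (\<Psi> t ** C t)) (at t within {a..b})"
    using matrix_ode_left_solution_exists[OF ab C] by blast
  have inv: "\<Phi> t ** \<Psi> t = mat 1"
    by (rule fundamental_matrix_inverse(2)[OF ab \<Phi>(1) \<Psi>(1) \<Phi>(2) \<Psi>(2) t])
  have "Y t = (\<Phi> t ** \<Psi> t) ** Y t" by (simp add: inv)
  also have "\<dots> = \<Phi> t ** (\<Psi> t ** Z t)"
    using matrix_ode_adjoint_product_constant[OF \<Psi>(2) Y s t]
      matrix_ode_adjoint_product_constant[OF \<Psi>(2) Z s t] YZ
    by (simp add: matrix_mul_assoc[symmetric])
  also have "\<dots> = Z t" by (simp add: matrix_mul_assoc inv)
  finally show ?thesis .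
qed

lemma skew_matrix_ode_gram_constant:
  fixes S Y :: "real \<Rightarrow> real^'n^'n"
  assumes Y: "\<And>t. t \<in> {a..b} \<Longrightarrow> (Y has_vector_derivative S t ** Y t) (at t within {a..b})"
    and skew: "\<And>t. t \<in> {a..b} \<Longrightarrow> transpose (S t) = - S t"
    and "s \<in> {a..b}" "t \<in> {a..b}"
  shows "transpose (Y t) ** Y t = transpose (Y s) ** Y s"
proof -
  have "((\<lambda>t. transpose (Y t) ** Y t) has_vector_derivative 0) (at r within {a..b})"
    if "r \<in> {a..b}" for r
    using has_vector_derivative_matrix_mult[OF has_vector_derivative_transpose[OF Y[OF that]] Y[OF that]]
    by (simp add: matrix_transpose_mul skew[OF that] matrix_mul_lneg matrix_mul_rneg matrix_mul_assoc)
  then obtain c where "\<And>r. r \<in> {a..b} \<Longrightarrow> transpose (Y r) ** Y r = c"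
    using has_vector_derivative_zero_constant[OF convex_real_interval(5)] by blast
  with assms(3,4) show ?thesis by simp
qed

section \<open>Propagators\<close>

definition propagator :: "real set \<Rightarrow> (real \<Rightarrow> real^'n^'n) \<Rightarrow> (real \<Rightarrow> real \<Rightarrow> real^'n^'n) \<Rightarrow> bool" where
  "propagator S C P \<longleftrightarrow> (\<forall>\<tau>\<in>S. P \<tau> \<tau> = mat 1 \<and>
     (\<forall>t\<in>S. ((\<lambda>s. P \<tau> s) has_vector_derivative C t ** P \<tau> t) (at t within S)))"

lemma propagatorD:
  assumes "propagator S C P" "\<tau> \<in> S"
  shows "P \<tau> \<tau> = mat 1"
    "\<And>t. t \<in> S \<Longrightarrow> ((\<lambda>s. P \<tau> s) has_vector_derivative C t ** P \<tau> t) (at t within S)"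
  using assms unfolding propagator_def by auto

lemma propagator_solution:
  fixes C Y :: "real \<Rightarrow> real^'n^'n"
  assumes "a \<le> b" "continuous_on {a..b} C" "propagator {a..b} C P"
    and Y: "\<And>t. t \<in> {a..b} \<Longrightarrow> (Y has_vector_derivative C t ** Y t) (at t within {a..b})"
    and "s \<in> {a..b}" "t \<in> {a..b}"
  shows "Y t = P s t ** Y s"
proof (rule matrix_ode_solution_unique[OF assms(1,2) Y _ assms(5) _ assms(6)])
  fix r assume "r \<in> {a..b}"
  from has_vector_derivative_matrix_mult[OF propagatorD(2)[OF assms(3,5) this]
      has_vector_derivative_const]
  show "((\<lambda>r. P s r ** Y s) has_vector_derivative C r ** (P s r ** Y s)) (at r within {a..b})"
    by (simp add: matrix_mul_assoc)
next
  show "Y s = P s s ** Y s" using propagatorD(1)[OF assms(3,5)] by simp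
qed

context
  fixes a b :: real and C :: "real \<Rightarrow> real^'n^'n" and P :: "real \<Rightarrow> real \<Rightarrow> real^'n^'n"
  assumes ab: "a \<le> b" and C: "continuous_on {a..b} C" and P: "propagator {a..b} C P"
begin

lemma propagator_unique:
  assumes "propagator {a..b} C Q" "\<tau> \<in> {a..b}" "t \<in> {a..b}"
  shows "Q \<tau> t = P \<tau> t"
  using propagator_solution[OF ab C P propagatorD(2)[OF assms(1,2)] assms(2,3)]
    propagatorD(1)[OF assms(1,2)] by simp

lemma propagator_compose:
  assumes "\<tau> \<in> {a..b}" "s \<in> {a..b}" "t \<in> {a..b}"
  shows "P \<tau> t = P s t ** P \<tau> s"
  using propagator_solution[OF ab C P propagatorD(2)[OF P assms(1)] assms(2,3)] .

lemma propagator_inverse: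
  assumes "\<tau> \<in> {a..b}" "t \<in> {a..b}"
  shows "P \<tau> t ** P t \<tau> = mat 1"
  using propagator_compose[OF assms(2,1,2)] propagatorD(1)[OF P assms(2)] by simp

lemma propagator_left_solution:
  assumes \<Psi>0: "\<Psi> a = mat 1"
    and \<Psi>: "\<And>t. t \<in> {a..b} \<Longrightarrow> (\<Psi> has_vector_derivative - (\<Psi> t ** C t)) (at t within {a..b})"
    and s: "s \<in> {a..b}"
  shows "P s a = \<Psi> s"
proof -
  have a: "a \<in> {a..b}" using ab by simp
  have "\<Psi> s ** P a s = mat 1"
    using matrix_ode_adjoint_product_constant[OF \<Psi> propagatorD(2)[OF P a] a s]
      \<Psi>0 propagatorD(1)[OF P a] by simp
  then have "\<Psi> s = \<Psi> s ** (P a s ** P s a)"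
    using propagator_inverse[OF a s] by (simp add: matrix_mul_assoc)
  also have "\<dots> = P s a"
    using \<open>\<Psi> s ** P a s = mat 1\<close> by (simp add: matrix_mul_assoc)
  finally show ?thesis by simp
qed

lemma propagator_through_left_solution:
  obtains \<Psi> :: "real \<Rightarrow> real^'n^'n"
  where "\<And>t. t \<in> {a..b} \<Longrightarrow> (\<Psi> has_vector_derivative - (\<Psi> t ** C t)) (at t within {a..b})"
    and "\<And>\<tau> t. \<tau> \<in> {a..b} \<Longrightarrow> t \<in> {a..b} \<Longrightarrow> P \<tau> t = P a t ** \<Psi> \<tau>"
proof -
  obtain \<Psi> :: "real \<Rightarrow> real^'n^'n" where \<Psi>: "\<Psi> a = mat 1"
    "\<And>t. t \<in> {a..b} \<Longrightarrow> (\<Psi> has_vector_derivative - (\<Psi> t ** C t)) (at t within {a..b})"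
    using matrix_ode_left_solution_exists[OF ab C] by blast
  have "P \<tau> t = P a t ** \<Psi> \<tau>" if "\<tau> \<in> {a..b}" "t \<in> {a..b}" for \<tau> t
    using propagator_compose[OF that(1) _ that(2), of a] ab propagator_left_solution[OF \<Psi> that(1)]
    by simp
  with \<Psi>(2) that show ?thesis by blast
qed

lemma propagator_lower_derivative:
  assumes "\<tau> \<in> {a..b}" "t \<in> {a..b}"
  shows "((\<lambda>s. P s t) has_vector_derivative - (P \<tau> t ** C \<tau>)) (at \<tau> within {a..b})"
proof -
  obtain \<Psi> :: "real \<Rightarrow> real^'n^'n"
    where \<Psi>: "\<And>t. t \<in> {a..b} \<Longrightarrow> (\<Psi> has_vector_derivative - (\<Psi> t ** C t)) (at t within {a..b})"
      and P_eq: "\<And>\<tau> t. \<tau> \<in> {a..b} \<Longrightarrow> t \<in> {a..b} \<Longrightarrow> P \<tau> t = P a t ** \<Psi> \<tau>"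
    using propagator_through_left_solution by metis
  have "((\<lambda>s. P a t ** \<Psi> s) has_vector_derivative P a t ** - (\<Psi> \<tau> ** C \<tau>) + 0 ** \<Psi> \<tau>)
          (at \<tau> within {a..b})"
    by (rule has_vector_derivative_matrix_mult[OF has_vector_derivative_const \<Psi>[OF assms(1)]])
  moreover have "P a t ** - (\<Psi> \<tau> ** C \<tau>) + 0 ** \<Psi> \<tau> = - (P \<tau> t ** C \<tau>)"
    using P_eq[OF assms] by (simp add: matrix_mul_rneg matrix_mul_assoc)
  ultimately have d: "((\<lambda>s. P a t ** \<Psi> s) has_vector_derivative - (P \<tau> t ** C \<tau>)) (at \<tau> within {a..b})"
    by simp
  show ?thesis
    by (rule has_vector_derivative_transform[where f = "\<lambda>s. P a t ** \<Psi> s", OF assms(1) _ d])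
       (rule P_eq[OF _ assms(2)])
qed

lemma propagator_continuous: "continuous_on ({a..b} \<times> {a..b}) (\<lambda>(\<tau>, t). P \<tau> t)"
proof -
  obtain \<Psi> :: "real \<Rightarrow> real^'n^'n"
    where \<Psi>: "\<And>t. t \<in> {a..b} \<Longrightarrow> (\<Psi> has_vector_derivative - (\<Psi> t ** C t)) (at t within {a..b})"
      and P_eq: "\<And>\<tau> t. \<tau> \<in> {a..b} \<Longrightarrow> t \<in> {a..b} \<Longrightarrow> P \<tau> t = P a t ** \<Psi> \<tau>"
    using propagator_through_left_solution by metis
  have "a \<in> {a..b}" using ab by simp
  have "continuous_on {a..b} (P a)"
    by (rule continuous_on_vector_derivative[OF propagatorD(2)[OF P \<open>a \<in> {a..b}\<close>]])
  moreover have "continuous_on {a..b} \<Psi>"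
    by (rule continuous_on_vector_derivative[OF \<Psi>])
  ultimately have "continuous_on ({a..b} \<times> {a..b}) (\<lambda>p. P a (snd p) ** \<Psi> (fst p))"
    by (intro continuous_on_matrix_mult continuous_on_product_snd continuous_on_product_fst)
  then show ?thesis
  proof (rule continuous_on_eq)
    fix p assume "p \<in> {a..b} \<times> {a..b}"
    then show "P a (snd p) ** \<Psi> (fst p) = (\<lambda>(\<tau>, t). P \<tau> t) p"
      using P_eq[of "fst p" "snd p"] by (auto simp: case_prod_beta)
  qed
qed

lemma propagator_transpose_skew:
  assumes skew: "\<And>t. t \<in> {a..b} \<Longrightarrow> transpose (C t) = - C t"
    and \<tau>: "\<tau> \<in> {a..b}" and t: "t \<in> {a..b}"
  shows "transpose (P \<tau> t) = P t \<tau>"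
proof -
  have orth: "transpose (P \<tau> t) ** P \<tau> t = mat 1"
    using skew_matrix_ode_gram_constant[OF propagatorD(2)[OF P \<tau>] skew \<tau> t] propagatorD(1)[OF P \<tau>]
    by simp
  have "transpose (P \<tau> t) = transpose (P \<tau> t) ** (P \<tau> t ** P t \<tau>)"
    using propagator_inverse[OF \<tau> t] by simp
  also have "\<dots> = P t \<tau>"
    by (simp add: matrix_mul_assoc orth)
  finally show ?thesis .
qed

end

lemma propagator_exists:
  fixes C :: "real \<Rightarrow> real^'n^'n"
  assumes ab: "a \<le> b" and C: "continuous_on {a..b} C"
  obtains P where "propagator {a..b} C P"
proof -
  obtain \<Phi> :: "real \<Rightarrow> real^'n^'n" where \<Phi>: "\<Phi> a = mat 1"
    "\<And>t. t \<in> {a..b} \<Longrightarrow> (\<Phi> has_vector_derivative C t ** \<Phi> t) (at t within {a..b})"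
    using matrix_ode_solution_exists[OF ab C] by blast
  obtain \<Psi> :: "real \<Rightarrow> real^'n^'n" where \<Psi>: "\<Psi> a = mat 1"
    "\<And>t. t \<in> {a..b} \<Longrightarrow> (\<Psi> has_vector_derivative - (\<Psi> t ** C t)) (at t within {a..b})"
    using matrix_ode_left_solution_exists[OF ab C] by blast
  have "propagator {a..b} C (\<lambda>\<tau> t. \<Phi> t ** \<Psi> \<tau>)"
    unfolding propagator_def
  proof (intro ballI conjI)
    fix \<tau> t assume "\<tau> \<in> {a..b}" "t \<in> {a..b}"
    show "\<Phi> \<tau> ** \<Psi> \<tau> = mat 1"
      by (rule fundamental_matrix_inverse(2)[OF ab \<Phi>(1) \<Psi>(1) \<Phi>(2) \<Psi>(2) \<open>\<tau> \<in> {a..b}\<close>])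
    show "((\<lambda>s. \<Phi> s ** \<Psi> \<tau>) has_vector_derivative C t ** (\<Phi> t ** \<Psi> \<tau>)) (at t within {a..b})"
      using has_vector_derivative_matrix_mult[OF \<Phi>(2)[OF \<open>t \<in> {a..b}\<close>] has_vector_derivative_const]
      by (simp add: matrix_mul_assoc)
  qed
  then show ?thesis by (rule that)
qed

lemma propagator_conjugate_upper_derivative:
  fixes A B :: "real \<Rightarrow> real^'n^'n"
  assumes ab: "a \<le> b" and A: "continuous_on {a..b} A" "propagator {a..b} A R"
    and B: "propagator {a..b} B F"
    and \<tau>: "\<tau> \<in> {a..b}" and t: "t \<in> {a..b}"
  shows "((\<lambda>s. R s \<tau> ** F \<tau> s) has_vector_derivative
           (R t \<tau> ** (B t - A t) ** R \<tau> t) ** (R t \<tau> ** F \<tau> t)) (at t within {a..b})"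
proof -
  have "R \<tau> t ** R t \<tau> = mat 1" by (rule propagator_inverse[OF ab A \<tau> t])
  then have "(R t \<tau> ** (B t - A t) ** R \<tau> t) ** (R t \<tau> ** F \<tau> t)
      = R t \<tau> ** (B t ** F \<tau> t) + - (R t \<tau> ** A t) ** F \<tau> t"
    by (simp add: matrix_mul_assoc[symmetric])
       (simp add: matrix_mul_assoc matrix_diff_ldistrib matrix_diff_rdistrib matrix_mul_lneg)
  with has_vector_derivative_matrix_mult[OF propagator_lower_derivative[OF ab A t \<tau>]
      propagatorD(2)[OF B \<tau> t]]
  show ?thesis by simp
qed

lemma propagator_conjugate_lower_derivative:
  fixes A B :: "real \<Rightarrow> real^'n^'n"
  assumes ab: "a \<le> b" and A: "continuous_on {a..b} A" "propagator {a..b} A R"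
    and B: "continuous_on {a..b} B" "propagator {a..b} B F"
    and \<tau>: "\<tau> \<in> {a..b}" and t: "t \<in> {a..b}"
  shows "((\<lambda>s. F s t ** R t s) has_vector_derivative
           (F \<tau> t ** R t \<tau>) ** (R \<tau> t ** (A \<tau> - B \<tau>) ** R t \<tau>)) (at \<tau> within {a..b})"
proof -
  have "R t \<tau> ** R \<tau> t = mat 1" by (rule propagator_inverse[OF ab A t \<tau>])
  then have "(F \<tau> t ** R t \<tau>) ** (R \<tau> t ** (A \<tau> - B \<tau>) ** R t \<tau>)
      = F \<tau> t ** (A \<tau> ** R t \<tau>) + - (F \<tau> t ** B \<tau>) ** R t \<tau>"
    by (simp add: matrix_mul_assoc[symmetric])
       (simp add: matrix_mul_assoc matrix_diff_ldistrib matrix_diff_rdistrib matrix_mul_lneg)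
  with has_vector_derivative_matrix_mult[OF propagator_lower_derivative[OF ab B \<tau> t]
      propagatorD(2)[OF A(2) t \<tau>]]
  show ?thesis by simp
qed

lemma matrix_inv_unique:
  fixes A B :: "'a::field^'n^'n"
  assumes AB: "A ** B = mat 1"
  shows "invertible A" "matrix_inv A = B"
proof -
  have BA: "B ** A = mat 1" using AB matrix_left_right_inverse by blast
  then show "invertible A" using AB unfolding invertible_def by blast
  have "A ** matrix_inv A = mat 1 \<and> matrix_inv A ** A = mat 1"
    unfolding matrix_inv_def by (rule someI[of _ B]) (simp add: AB BA)
  then have inv: "matrix_inv A ** A = mat 1" by simp
  have "matrix_inv A = matrix_inv A ** (A ** B)" by (simp add: AB)
  also have "\<dots> = B" by (simp add: matrix_mul_assoc inv)
  finally show "matrix_inv A = B" .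
qed

lemma matrix_inv_left:
  fixes A :: "'a::field^'n^'n"
  assumes "invertible A"
  shows "matrix_inv A ** A = mat 1"
proof -
  obtain B where "A ** B = mat 1" using assms invertible_right_inverse by blast
  then show ?thesis using matrix_inv_unique(2) matrix_left_right_inverse by metis
qed

lemma spin_skew: "transpose (spin L) = - spin L"
  by (simp add: spin_def transpose_scalar transpose_diff scaleR_diff_right)

lemma strain_rate_sym: "transpose (strain_rate L) = strain_rate L"
  by (simp add: strain_rate_def transpose_scalar transpose_add add.commute)

lemma spin_plus_strain_rate: "spin L + strain_rate L = L"
proof -
  have "spin L + strain_rate L = (1/2) *\<^sub>R ((L - transpose L) + (L + transpose L))"
    by (simp only: spin_def strain_rate_def scaleR_add_right)
  also have "(L - transpose L) + (L + transpose L) = 2 *\<^sub>R L"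
    by (simp add: scaleR_2)
  finally show ?thesis by simp
qed

lemma diff_spin_eq_strain_rate: "L - spin L = strain_rate L"
  using spin_plus_strain_rate[of L] by (simp add: algebra_simps)

lemma spin_diff_eq_minus_strain_rate: "spin L - L = - strain_rate L"
  using spin_plus_strain_rate[of L] by (simp add: algebra_simps)

lemma spin_sym_plus_skew:
  assumes "transpose S = S" "transpose K = - K"
  shows "spin (S + K) = K"
proof -
  have "S + K - transpose (S + K) = 2 *\<^sub>R K"
    by (simp add: transpose_add assms scaleR_2)
  then show ?thesis by (simp add: spin_def)
qed

lemma continuous_on_spin [continuous_intros]:
  "continuous_on S L \<Longrightarrow> continuous_on S (\<lambda>t. spin (L t))"
  unfolding spin_def by (intro continuous_intros)

lemma continuous_on_strain_rate [continuous_intros]: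
  "continuous_on S L \<Longrightarrow> continuous_on S (\<lambda>t. strain_rate (L t))"
  unfolding strain_rate_def by (intro continuous_intros)

lemma sv_mult_mult_orthogonal:
  fixes X Q :: mat3
  assumes Q1: "Q ** transpose Q = mat 1" and Q2: "transpose Q ** Q = mat 1"
  shows "sv_mult (X ** transpose Q) = sv_mult X"
proof
  fix \<sigma> :: real
  define S where "S = transpose X ** X"
  define E where "E = {w. S *v w = (\<sigma>^2) *\<^sub>R w}"
  have gram: "transpose (X ** transpose Q) ** (X ** transpose Q) = Q ** S ** transpose Q"
    by (simp add: S_def matrix_transpose_mul matrix_mul_assoc)
  have eigen: "{v. (Q ** S ** transpose Q) *v v = (\<sigma>^2) *\<^sub>R v} = (\<lambda>w. Q *v w) ` E"
  proof (intro set_eqI iffI)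
    fix v assume "v \<in> {v. (Q ** S ** transpose Q) *v v = (\<sigma>^2) *\<^sub>R v}"
    then have v: "(Q ** S ** transpose Q) *v v = (\<sigma>^2) *\<^sub>R v" by simp
    have "S *v (transpose Q *v v) = transpose Q *v ((Q ** S ** transpose Q) *v v)"
      by (simp add: matrix_vector_mul_assoc matrix_mul_assoc Q2 del: transpose_matrix_vector)
    also have "\<dots> = (\<sigma>^2) *\<^sub>R (transpose Q *v v)" by (simp add: v matrix_vector_mult_scaleR)
    finally have "transpose Q *v v \<in> E" by (simp add: E_def del: transpose_matrix_vector)
    moreover have "v = Q *v (transpose Q *v v)"
      by (simp add: matrix_vector_mul_assoc Q1 del: transpose_matrix_vector)
    ultimately show "v \<in> (\<lambda>w. Q *v w) ` E" by (metis image_eqI)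
  next
    fix v assume "v \<in> (\<lambda>w. Q *v w) ` E"
    then obtain w where w: "S *v w = (\<sigma>^2) *\<^sub>R w" and v: "v = Q *v w" by (auto simp: E_def)
    have "(Q ** S ** transpose Q) *v v = Q *v (S *v w)"
      by (simp add: v matrix_vector_mul_assoc matrix_mul_assoc[symmetric] Q2
          del: transpose_matrix_vector)
    also have "\<dots> = (\<sigma>^2) *\<^sub>R v" by (simp add: w v matrix_vector_mult_scaleR)
    finally show "v \<in> {v. (Q ** S ** transpose Q) *v v = (\<sigma>^2) *\<^sub>R v}" by simp
  qed
  have "inj ((*v) Q)"
    by (rule inj_matrix_vector_mult) (use Q1 Q2 invertible_def in blast)
  then have "dim ((\<lambda>w. Q *v w) ` E) = dim E"
    by (intro eucl.dim_image_eq matrix_vector_mul_linear) (simp add: inj_on_def inj_def)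
  then show "sv_mult (X ** transpose Q) \<sigma> = sv_mult X \<sigma>"
    unfolding sv_mult_def gram eigen by (simp add: E_def S_def)
qed

section \<open>Two-parameter families\<close>

lemma dt_eq:
  assumes "a < b" "t \<in> {a..b}" "((\<lambda>s. T \<tau> s) has_vector_derivative X) (at t within {a..b})"
  shows "dt {a..b} T \<tau> t = X"
  unfolding dt_def by (rule vector_derivative_within_closed_interval[OF assms])

lemma dtau_eq:
  assumes "a < b" "\<tau> \<in> {a..b}" "((\<lambda>s. T s t) has_vector_derivative X) (at \<tau> within {a..b})"
  shows "dtau {a..b} T \<tau> t = X"
  unfolding dtau_def by (rule vector_derivative_within_closed_interval[OF assms])

lemma C1_familyI:
  assumes ab: "a < b"
    and dT: "\<And>\<tau> t. \<tau> \<in> {a..b} \<Longrightarrow> t \<in> {a..b} \<Longrightarrow>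
               ((\<lambda>s. T \<tau> s) has_vector_derivative P \<tau> t) (at t within {a..b})"
    and dT': "\<And>\<tau> t. \<tau> \<in> {a..b} \<Longrightarrow> t \<in> {a..b} \<Longrightarrow>
               ((\<lambda>s. T s t) has_vector_derivative Q \<tau> t) (at \<tau> within {a..b})"
    and P: "continuous_on ({a..b} \<times> {a..b}) (\<lambda>(\<tau>, t). P \<tau> t)"
    and Q: "continuous_on ({a..b} \<times> {a..b}) (\<lambda>(\<tau>, t). Q \<tau> t)"
  shows "C1_family {a..b} T"
proof -
  have dt: "dt {a..b} T \<tau> t = P \<tau> t" and dtau: "dtau {a..b} T \<tau> t = Q \<tau> t"
    if "\<tau> \<in> {a..b}" "t \<in> {a..b}" for \<tau> t
    using dt_eq[where T = T, OF ab that(2) dT[OF that]] dtau_eq[where T = T, OF ab that(1) dT'[OF that]]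
    by auto
  have "continuous_on ({a..b} \<times> {a..b}) (\<lambda>(\<tau>, t). dt {a..b} T \<tau> t)"
    by (rule continuous_on_eq[OF P]) (auto simp: dt)
  moreover have "continuous_on ({a..b} \<times> {a..b}) (\<lambda>(\<tau>, t). dtau {a..b} T \<tau> t)"
    by (rule continuous_on_eq[OF Q]) (auto simp: dtau)
  ultimately show ?thesis
    unfolding C1_family_def using dT dT' by (simp add: dt dtau)
qed

lemma C1_familyD:
  assumes "C1_family I T"
  shows "\<And>\<tau> t. \<tau> \<in> I \<Longrightarrow> t \<in> I \<Longrightarrow> ((\<lambda>s. T \<tau> s) has_vector_derivative dt I T \<tau> t) (at t within I)"
    "\<And>\<tau> t. \<tau> \<in> I \<Longrightarrow> t \<in> I \<Longrightarrow> ((\<lambda>s. T s t) has_vector_derivative dtau I T \<tau> t) (at \<tau> within I)"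
    "continuous_on (I \<times> I) (\<lambda>(\<tau>, t). dt I T \<tau> t)"
    "continuous_on (I \<times> I) (\<lambda>(\<tau>, t). dtau I T \<tau> t)"
  using assms unfolding C1_family_def by auto

lemma C1_family_swap: "C1_family I T \<Longrightarrow> C1_family I (\<lambda>\<tau> t. T t \<tau>)"
  unfolding C1_family_def dt_def dtau_def
  by (auto dest: continuous_on_swap_args)

lemma C1_family_transpose:
  assumes ab: "a < b" and T: "C1_family {a..b} T"
  shows "C1_family {a..b} (\<lambda>\<tau> t. transpose (T \<tau> t))"
  by (rule C1_familyI[OF ab has_vector_derivative_transpose has_vector_derivative_transpose])
     (auto simp: case_prod_unfold intro!: C1_familyD[OF T] continuous_on_transpose
       C1_familyD(3,4)[OF T, unfolded case_prod_unfold])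

lemma C1_family_mult:
  assumes ab: "a < b"
    and X: "C1_family {a..b} X" "continuous_on ({a..b} \<times> {a..b}) (\<lambda>(\<tau>, t). X \<tau> t)"
    and Y: "C1_family {a..b} Y" "continuous_on ({a..b} \<times> {a..b}) (\<lambda>(\<tau>, t). Y \<tau> t)"
  shows "C1_family {a..b} (\<lambda>\<tau> t. X \<tau> t ** Y \<tau> t)"
  by (rule C1_familyI[OF ab has_vector_derivative_matrix_mult has_vector_derivative_matrix_mult])
     (auto simp: case_prod_unfold intro!: C1_familyD[OF X(1)] C1_familyD[OF Y(1)] continuous_intros
       C1_familyD(3,4)[OF X(1), unfolded case_prod_unfold]
       C1_familyD(3,4)[OF Y(1), unfolded case_prod_unfold]
       X(2)[unfolded case_prod_unfold] Y(2)[unfolded case_prod_unfold])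

lemma continuous_on_propagator_swap:
  assumes "a \<le> b" "continuous_on {a..b} C" "propagator {a..b} C P"
  shows "continuous_on ({a..b} \<times> {a..b}) (\<lambda>(\<tau>, t). P t \<tau>)"
  using continuous_on_swap_args[OF propagator_continuous[OF assms]] .

lemma C1_family_propagator:
  fixes C :: "real \<Rightarrow> mat3"
  assumes ab: "a < b" and C: "continuous_on {a..b} C" and P: "propagator {a..b} C P"
  shows "C1_family {a..b} P"
proof (rule C1_familyI[OF ab propagatorD(2)[OF P] propagator_lower_derivative[OF _ C P]])
  note cP = propagator_continuous[OF _ C P, unfolded case_prod_unfold]
  show "continuous_on ({a..b} \<times> {a..b}) (\<lambda>(\<tau>, t). C t ** P \<tau> t)"
    using ab unfolding case_prod_unfold
    by (intro continuous_intros continuous_on_product_snd C cP) simp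
  show "continuous_on ({a..b} \<times> {a..b}) (\<lambda>(\<tau>, t). - (P \<tau> t ** C \<tau>))"
    using ab unfolding case_prod_unfold
    by (intro continuous_intros continuous_on_product_fst C cP) simp
qed (use ab in auto)

lemma linear_process_propagator:
  fixes C :: "real \<Rightarrow> mat3"
  assumes ab: "a < b" and C: "continuous_on {a..b} C" and P: "propagator {a..b} C P"
  shows "linear_process {a..b} P"
  unfolding linear_process_def
proof (intro conjI ballI C1_family_propagator[OF assms])
  fix \<tau> s t assume "\<tau> \<in> {a..b}" "s \<in> {a..b}" "t \<in> {a..b}"
  then show "P \<tau> t = P s t ** P \<tau> s" using ab by (intro propagator_compose[OF _ C P]) auto
qed (rule propagatorD(1)[OF P])

lemma rotational_propagator:
  fixes C :: "real \<Rightarrow> mat3"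
  assumes ab: "a < b" and C: "continuous_on {a..b} C" and P: "propagator {a..b} C P"
    and skew: "\<And>t. t \<in> {a..b} \<Longrightarrow> transpose (C t) = - C t"
  shows "rotational {a..b} P"
  unfolding rotational_def
proof (intro conjI ballI C1_family_propagator[OF assms(1-3)])
  fix \<tau> t assume \<tau>: "\<tau> \<in> {a..b}" and t: "t \<in> {a..b}"
  have inv: "P \<tau> t ** P t \<tau> = mat 1" using propagator_inverse[OF _ C P \<tau> t] ab by simp
  then show "invertible (P \<tau> t)" by (rule matrix_inv_unique)
  have "dt {a..b} P \<tau> t = C t ** P \<tau> t"
    by (rule dt_eq[where T = P, OF ab t propagatorD(2)[OF P \<tau> t]])
  then have "dt {a..b} P \<tau> t ** matrix_inv (P \<tau> t) = C t ** (P \<tau> t ** P t \<tau>)"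
    by (simp add: matrix_inv_unique(2)[OF inv] matrix_mul_assoc)
  then have "dt {a..b} P \<tau> t ** matrix_inv (P \<tau> t) = C t"
    by (simp add: inv)
  then show "skew_sym (dt {a..b} P \<tau> t ** matrix_inv (P \<tau> t))"
    by (simp add: skew_sym_def skew[OF t])
qed

lemma C1_family_log_derivative:
  assumes "C1_family I T" "\<tau> \<in> I" "t \<in> I" "invertible (T \<tau> t)"
  shows "((\<lambda>s. T \<tau> s) has_vector_derivative (dt I T \<tau> t ** matrix_inv (T \<tau> t)) ** T \<tau> t) (at t within I)"
  using C1_familyD(1)[OF assms(1-3)] matrix_inv_left[OF assms(4)]
  by (simp add: matrix_mul_assoc[symmetric])

lemma log_derivative_product_orthogonal:
  fixes Q M F :: "real \<Rightarrow> real^'n^'n"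
  assumes ab: "a < b" and t: "t \<in> {a..b}"
    and F: "\<And>s. s \<in> {a..b} \<Longrightarrow> F s = Q s ** M s"
    and dQ: "(Q has_vector_derivative S ** Q t) (at t within {a..b})"
    and dM: "(M has_vector_derivative T ** M t) (at t within {a..b})"
    and dF: "(F has_vector_derivative L ** F t) (at t within {a..b})"
    and F_inv: "F t ** G = mat 1"
    and orth: "transpose (Q t) ** Q t = mat 1"
  shows "L = Q t ** T ** transpose (Q t) + S"
proof -
  have "(Q t ** T ** transpose (Q t)) ** (Q t ** M t) = Q t ** T ** (transpose (Q t) ** Q t) ** M t"
    by (simp add: matrix_mul_assoc)
  then have "Q t ** (T ** M t) + (S ** Q t) ** M t = (Q t ** T ** transpose (Q t) + S) ** F t"
    by (simp add: F[OF t] orth matrix_add_rdistrib matrix_mul_assoc)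
  with has_vector_derivative_matrix_mult[OF dQ dM]
  have "(F has_vector_derivative (Q t ** T ** transpose (Q t) + S) ** F t) (at t within {a..b})"
    by (intro has_vector_derivative_transform[where f = "\<lambda>s. Q s ** M s", OF t F]) simp_all
  then have LF: "L ** F t = (Q t ** T ** transpose (Q t) + S) ** F t"
    using vector_derivative_unique_within_closed_interval[of a b t F] ab t dF
    by (simp add: cbox_interval)
  have "L = (L ** F t) ** G" by (simp add: F_inv matrix_mul_assoc[symmetric])
  also have "\<dots> = Q t ** T ** transpose (Q t) + S" by (simp add: LF F_inv matrix_mul_assoc[symmetric])
  finally show ?thesis .
qed

lemma rotational_orthogonal:
  assumes R: "rotational {a..b} R" and \<tau>: "\<tau> \<in> {a..b}" "R \<tau> \<tau> = mat 1" and t: "t \<in> {a..b}"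
  shows "transpose (R \<tau> t) ** R \<tau> t = mat 1"
proof -
  have C1: "C1_family {a..b} R"
    and inv: "\<And>t. t \<in> {a..b} \<Longrightarrow> invertible (R \<tau> t)"
    and skew: "\<And>t. t \<in> {a..b} \<Longrightarrow> skew_sym (dt {a..b} R \<tau> t ** matrix_inv (R \<tau> t))"
    using R \<tau>(1) unfolding rotational_def by auto
  show ?thesis
    using skew_matrix_ode_gram_constant[OF C1_family_log_derivative[OF C1 \<tau>(1) _ inv] _ \<tau>(1) t]
      skew \<tau>(2) unfolding skew_sym_def by simp
qed

section \<open>The decomposition in the frame rotating with the spin\<close>

text \<open>R is the rotation O of the paper; the factors are M \<tau> t = (R \<tau> t)^T ** F \<tau> t = R t \<tau> ** F \<tau> t
  and N \<tau> t = F \<tau> t ** R t \<tau>.\<close>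

locale spin_frame =
  fixes t0 t1 :: real and L :: "real \<Rightarrow> mat3" and F R :: "real \<Rightarrow> real \<Rightarrow> mat3"
  assumes t01: "t0 < t1"
    and L: "continuous_on {t0..t1} L"
    and F: "propagator {t0..t1} L F"
    and R: "propagator {t0..t1} (\<lambda>t. spin (L t)) R"
begin

lemma t01_le: "t0 \<le> t1"
  using t01 by simp

lemma spin_continuous: "continuous_on {t0..t1} (\<lambda>t. spin (L t))"
  by (intro continuous_intros L)

lemma R_transpose: "\<tau> \<in> {t0..t1} \<Longrightarrow> t \<in> {t0..t1} \<Longrightarrow> transpose (R \<tau> t) = R t \<tau>"
  by (rule propagator_transpose_skew[OF t01_le spin_continuous R spin_skew])

lemma R_inverse: "\<tau> \<in> {t0..t1} \<Longrightarrow> t \<in> {t0..t1} \<Longrightarrow> R \<tau> t ** R t \<tau> = mat 1"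
  by (rule propagator_inverse[OF t01_le spin_continuous R])

lemma F_inverse: "\<tau> \<in> {t0..t1} \<Longrightarrow> t \<in> {t0..t1} \<Longrightarrow> F \<tau> t ** F t \<tau> = mat 1"
  by (rule propagator_inverse[OF t01_le L F])

lemma stretch_derivative:
  assumes "\<tau> \<in> {t0..t1}" "t \<in> {t0..t1}"
  shows "((\<lambda>s. R s \<tau> ** F \<tau> s) has_vector_derivative
           (R t \<tau> ** strain_rate (L t) ** R \<tau> t) ** (R t \<tau> ** F \<tau> t)) (at t within {t0..t1})"
  using propagator_conjugate_upper_derivative[OF t01_le spin_continuous R F assms]
  by (simp only: diff_spin_eq_strain_rate)

lemma left_stretch_transpose_derivative:
  assumes \<tau>: "\<tau> \<in> {t0..t1}" and t: "t \<in> {t0..t1}"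
  shows "((\<lambda>s. transpose (F s t ** R t s)) has_vector_derivative
           - (R \<tau> t ** strain_rate (L \<tau>) ** R t \<tau>) ** transpose (F \<tau> t ** R t \<tau>)) (at \<tau> within {t0..t1})"
proof -
  have "transpose ((F \<tau> t ** R t \<tau>) ** (R \<tau> t ** (spin (L \<tau>) - L \<tau>) ** R t \<tau>))
      = - (R \<tau> t ** strain_rate (L \<tau>) ** R t \<tau>) ** transpose (F \<tau> t ** R t \<tau>)"
    by (simp add: spin_diff_eq_minus_strain_rate matrix_transpose_mul R_transpose[OF \<tau> t]
        R_transpose[OF t \<tau>] strain_rate_sym transpose_minus matrix_mul_lneg matrix_mul_rneg matrix_mul_assoc)
  with has_vector_derivative_transpose[OF
      propagator_conjugate_lower_derivative[OF t01_le spin_continuous R L F \<tau> t]]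
  show ?thesis by simp
qed

lemma R_continuous_swap: "continuous_on ({t0..t1} \<times> {t0..t1}) (\<lambda>(\<tau>, t). R t \<tau>)"
  by (rule continuous_on_propagator_swap[OF t01_le spin_continuous R])

lemma stretch_inverse:
  assumes "\<tau> \<in> {t0..t1}" "t \<in> {t0..t1}"
  shows "(R t \<tau> ** F \<tau> t) ** (F t \<tau> ** R \<tau> t) = mat 1"
proof -
  have "(R t \<tau> ** F \<tau> t) ** (F t \<tau> ** R \<tau> t) = R t \<tau> ** (F \<tau> t ** F t \<tau>) ** R \<tau> t"
    by (simp add: matrix_mul_assoc)
  then show ?thesis using F_inverse[OF assms] R_inverse[OF assms(2,1)] by simp
qed

lemma irrotational_stretch: "irrotational {t0..t1} (\<lambda>\<tau> t. R t \<tau> ** F \<tau> t)"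
  unfolding irrotational_def
proof (intro conjI ballI)
  show "C1_family {t0..t1} (\<lambda>\<tau> t. R t \<tau> ** F \<tau> t)"
    by (rule C1_family_mult[OF t01 C1_family_swap[OF C1_family_propagator[OF t01 spin_continuous R]]
          R_continuous_swap C1_family_propagator[OF t01 L F] propagator_continuous[OF t01_le L F]])
  fix \<tau> t assume \<tau>: "\<tau> \<in> {t0..t1}" and t: "t \<in> {t0..t1}"
  note inv = stretch_inverse[OF \<tau> t]
  show "invertible (R t \<tau> ** F \<tau> t)" by (rule matrix_inv_unique(1)[OF inv])
  have "dt {t0..t1} (\<lambda>\<tau> t. R t \<tau> ** F \<tau> t) \<tau> t ** matrix_inv (R t \<tau> ** F \<tau> t)
      = (R t \<tau> ** strain_rate (L t) ** R \<tau> t) ** ((R t \<tau> ** F \<tau> t) ** (F t \<tau> ** R \<tau> t))"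
    unfolding dt_eq[where T = "\<lambda>\<tau> t. R t \<tau> ** F \<tau> t", OF t01 t stretch_derivative[OF \<tau> t]]
      matrix_inv_unique(2)[OF inv]
    by (simp add: matrix_mul_assoc)
  also have "\<dots> = R t \<tau> ** strain_rate (L t) ** R \<tau> t" by (simp add: inv)
  finally show "sym_mat (dt {t0..t1} (\<lambda>\<tau> t. R t \<tau> ** F \<tau> t) \<tau> t ** matrix_inv (R t \<tau> ** F \<tau> t))"
    unfolding sym_mat_def
    by (simp add: matrix_transpose_mul R_transpose[OF \<tau> t] R_transpose[OF t \<tau>] strain_rate_sym
        matrix_mul_assoc)
qed

lemma irrotational_tau_left_stretch: "irrotational_tau {t0..t1} (\<lambda>\<tau> t. transpose (F \<tau> t ** R t \<tau>))"
  unfolding irrotational_tau_def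
proof (intro conjI ballI)
  show "C1_family {t0..t1} (\<lambda>\<tau> t. transpose (F \<tau> t ** R t \<tau>))"
    by (rule C1_family_transpose[OF t01 C1_family_mult[OF t01 C1_family_propagator[OF t01 L F]
          propagator_continuous[OF t01_le L F]
          C1_family_swap[OF C1_family_propagator[OF t01 spin_continuous R]] R_continuous_swap]])
  fix \<tau> t assume \<tau>: "\<tau> \<in> {t0..t1}" and t: "t \<in> {t0..t1}"
  have inv: "transpose (F \<tau> t ** R t \<tau>) ** transpose (R \<tau> t ** F t \<tau>) = mat 1"
    using stretch_inverse[OF t \<tau>] by (metis matrix_transpose_mul transpose_mat)
  show "invertible (transpose (F \<tau> t ** R t \<tau>))" by (rule matrix_inv_unique(1)[OF inv])
  have "dtau {t0..t1} (\<lambda>\<tau> t. transpose (F \<tau> t ** R t \<tau>)) \<tau> t ** matrix_inv (transpose (F \<tau> t ** R t \<tau>))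
      = - (R \<tau> t ** strain_rate (L \<tau>) ** R t \<tau>)
          ** (transpose (F \<tau> t ** R t \<tau>) ** transpose (R \<tau> t ** F t \<tau>))"
    unfolding dtau_eq[where T = "\<lambda>\<tau> t. transpose (F \<tau> t ** R t \<tau>)",
        OF t01 \<tau> left_stretch_transpose_derivative[OF \<tau> t]]
      matrix_inv_unique(2)[OF inv]
    by (simp add: matrix_mul_assoc)
  also have "\<dots> = - (R \<tau> t ** strain_rate (L \<tau>) ** R t \<tau>)" by (simp add: inv)
  finally show "sym_mat (dtau {t0..t1} (\<lambda>\<tau> t. transpose (F \<tau> t ** R t \<tau>)) \<tau> t
      ** matrix_inv (transpose (F \<tau> t ** R t \<tau>)))"
    unfolding sym_mat_def
    by (simp add: matrix_transpose_mul R_transpose[OF \<tau> t] R_transpose[OF t \<tau>] strain_rate_sym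
        transpose_minus matrix_mul_assoc)
qed

lemma OMN_decomp_stretches:
  "OMN_decomp {t0..t1} F R (\<lambda>\<tau> t. R t \<tau> ** F \<tau> t) (\<lambda>\<tau> t. F \<tau> t ** R t \<tau>)"
  unfolding OMN_decomp_def
proof (intro conjI ballI irrotational_stretch irrotational_tau_left_stretch
    linear_process_propagator[OF t01 spin_continuous R]
    rotational_propagator[OF t01 spin_continuous R spin_skew])
  fix \<tau> t assume \<tau>: "\<tau> \<in> {t0..t1}" and t: "t \<in> {t0..t1}"
  show "F \<tau> t = R \<tau> t ** (R t \<tau> ** F \<tau> t)"
    by (simp add: matrix_mul_assoc R_inverse[OF \<tau> t])
  show "F \<tau> t = (F \<tau> t ** R t \<tau>) ** R \<tau> t"
    by (simp add: matrix_mul_assoc[symmetric] R_inverse[OF t \<tau>])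
qed

lemma rotation_factor_log_derivative:
  assumes dec: "OMN_decomp {t0..t1} F R' M' N'" and \<tau>: "\<tau> \<in> {t0..t1}" and t: "t \<in> {t0..t1}"
  shows "dt {t0..t1} R' \<tau> t ** matrix_inv (R' \<tau> t) = spin (L t)"
proof -
  define S where "S = dt {t0..t1} R' \<tau> t ** matrix_inv (R' \<tau> t)"
  define T where "T = dt {t0..t1} M' \<tau> t ** matrix_inv (M' \<tau> t)"
  have factor: "\<And>s. s \<in> {t0..t1} \<Longrightarrow> F \<tau> s = R' \<tau> s ** M' \<tau> s"
    and rot: "rotational {t0..t1} R'" "R' \<tau> \<tau> = mat 1" and irr: "irrotational {t0..t1} M'"
    using dec \<tau> unfolding OMN_decomp_def linear_process_def by blast+
  have skew: "transpose S = - S" and sym: "transpose T = T"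
    using rot(1) irr \<tau> t unfolding S_def T_def rotational_def irrotational_def skew_sym_def sym_mat_def
    by auto
  have "L t = R' \<tau> t ** T ** transpose (R' \<tau> t) + S"
  proof (rule log_derivative_product_orthogonal[OF t01 t factor _ _ propagatorD(2)[OF F \<tau> t]
        F_inverse[OF \<tau> t] rotational_orthogonal[OF rot(1) \<tau> rot(2) t]])
    show "((\<lambda>s. R' \<tau> s) has_vector_derivative S ** R' \<tau> t) (at t within {t0..t1})"
      using rot(1) \<tau> t unfolding S_def rotational_def by (intro C1_family_log_derivative) auto
    show "((\<lambda>s. M' \<tau> s) has_vector_derivative T ** M' \<tau> t) (at t within {t0..t1})"
      using irr \<tau> t unfolding T_def irrotational_def by (intro C1_family_log_derivative) auto
  qed
  moreover have "transpose (R' \<tau> t ** T ** transpose (R' \<tau> t)) = R' \<tau> t ** T ** transpose (R' \<tau> t)"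
    by (simp add: matrix_transpose_mul sym matrix_mul_assoc)
  ultimately show ?thesis
    using spin_sym_plus_skew[OF _ skew] by (simp add: S_def)
qed

lemma rotation_factor_propagator:
  assumes dec: "OMN_decomp {t0..t1} F R' M' N'"
  shows "propagator {t0..t1} (\<lambda>t. spin (L t)) R'"
  unfolding propagator_def
proof (intro ballI conjI)
  fix \<tau> t assume \<tau>: "\<tau> \<in> {t0..t1}" and t: "t \<in> {t0..t1}"
  have rot: "rotational {t0..t1} R'" and lp: "linear_process {t0..t1} R'"
    using dec unfolding OMN_decomp_def by blast+
  show "R' \<tau> \<tau> = mat 1" using lp \<tau> unfolding linear_process_def by blast
  show "((\<lambda>s. R' \<tau> s) has_vector_derivative spin (L t) ** R' \<tau> t) (at t within {t0..t1})"
    using C1_family_log_derivative[of "{t0..t1}" R' \<tau> t] rot \<tau> t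
      rotation_factor_log_derivative[OF dec \<tau> t]
    unfolding rotational_def by simp
qed

lemma OMN_decomp_unique:
  assumes dec: "OMN_decomp {t0..t1} F R' M' N'" and \<tau>: "\<tau> \<in> {t0..t1}" and t: "t \<in> {t0..t1}"
  shows "R' \<tau> t = R \<tau> t" "M' \<tau> t = R t \<tau> ** F \<tau> t" "N' \<tau> t = F \<tau> t ** R t \<tau>"
proof -
  show R'R: "R' \<tau> t = R \<tau> t"
    by (rule propagator_unique[OF t01_le spin_continuous R rotation_factor_propagator[OF dec] \<tau> t])
  have "F \<tau> t = R' \<tau> t ** M' \<tau> t \<and> F \<tau> t = N' \<tau> t ** R' \<tau> t"
    using dec \<tau> t unfolding OMN_decomp_def by blast
  then have F: "F \<tau> t = R \<tau> t ** M' \<tau> t" "F \<tau> t = N' \<tau> t ** R \<tau> t"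
    unfolding R'R[symmetric] by blast+
  show "M' \<tau> t = R t \<tau> ** F \<tau> t"
    by (simp add: F(1) matrix_mul_assoc R_inverse[OF t \<tau>])
  show "N' \<tau> t = F \<tau> t ** R t \<tau>"
    by (simp add: F(2) matrix_mul_assoc[symmetric] R_inverse[OF \<tau> t])
qed

lemma stretch_properties:
  assumes \<tau>: "\<tau> \<in> {t0..t1}" and t: "t \<in> {t0..t1}"
  shows "invertible (R t \<tau> ** F \<tau> t)" "invertible (F \<tau> t ** R t \<tau>)"
    "F \<tau> t ** R t \<tau> = matrix_inv (R \<tau> t ** F t \<tau>)"
    "transpose (R t \<tau> ** F \<tau> t) ** (R t \<tau> ** F \<tau> t) = transpose (F \<tau> t) ** F \<tau> t"
    "(F \<tau> t ** R t \<tau>) ** transpose (F \<tau> t ** R t \<tau>) = F \<tau> t ** transpose (F \<tau> t)"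
    "same_singular_values (R t \<tau> ** F \<tau> t) (F \<tau> t)"
    "same_singular_values (F \<tau> t ** R t \<tau>) (F \<tau> t)"
proof -
  note inv = stretch_inverse[OF t \<tau>]
  show "invertible (R t \<tau> ** F \<tau> t)" by (rule matrix_inv_unique(1)[OF stretch_inverse[OF \<tau> t]])
  show "F \<tau> t ** R t \<tau> = matrix_inv (R \<tau> t ** F t \<tau>)" by (rule matrix_inv_unique(2)[OF inv, symmetric])
  show "invertible (F \<tau> t ** R t \<tau>)"
    using inv matrix_left_right_inverse matrix_inv_unique(1) by blast
  have RR: "R \<tau> t ** R t \<tau> = mat 1" "R t \<tau> ** R \<tau> t = mat 1"
    using R_inverse \<tau> t by auto
  show gram: "transpose (R t \<tau> ** F \<tau> t) ** (R t \<tau> ** F \<tau> t) = transpose (F \<tau> t) ** F \<tau> t"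
    by (simp add: matrix_transpose_mul R_transpose[OF t \<tau>] matrix_mul_assoc)
       (simp add: matrix_mul_assoc[symmetric] RR)
  show "(F \<tau> t ** R t \<tau>) ** transpose (F \<tau> t ** R t \<tau>) = F \<tau> t ** transpose (F \<tau> t)"
    by (simp add: matrix_transpose_mul R_transpose[OF t \<tau>] matrix_mul_assoc)
       (simp add: matrix_mul_assoc[symmetric] RR)
  show "same_singular_values (R t \<tau> ** F \<tau> t) (F \<tau> t)"
    unfolding same_singular_values_def sv_mult_def gram ..
  show "same_singular_values (F \<tau> t ** R t \<tau>) (F \<tau> t)"
    using sv_mult_mult_orthogonal[of "R \<tau> t" "F \<tau> t"] RR
    unfolding same_singular_values_def R_transpose[OF \<tau> t] R_transpose[OF t \<tau>] by simp
qed

lemma stretch_ode_unique: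
  assumes \<tau>: "\<tau> \<in> {t0..t1}" and M0: "M' \<tau> \<tau> = mat 1"
    and dM: "\<And>t. t \<in> {t0..t1} \<Longrightarrow> ((\<lambda>s. M' \<tau> s) has_vector_derivative
               (R t \<tau> ** strain_rate (L t) ** R \<tau> t) ** M' \<tau> t) (at t within {t0..t1})"
    and t: "t \<in> {t0..t1}"
  shows "M' \<tau> t = R t \<tau> ** F \<tau> t"
proof (rule matrix_ode_solution_unique[OF t01_le _ dM stretch_derivative[OF \<tau>] \<tau> _ t])
  show "continuous_on {t0..t1} (\<lambda>s. R s \<tau> ** strain_rate (L s) ** R \<tau> s)"
    using propagator_lower_derivative[OF t01_le spin_continuous R _ \<tau>] propagatorD(2)[OF R \<tau>]
    by (intro continuous_intros L continuous_on_vector_derivative) auto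
  show "M' \<tau> \<tau> = R \<tau> \<tau> ** F \<tau> \<tau>"
    using M0 propagatorD(1)[OF R \<tau>] propagatorD(1)[OF F \<tau>] by simp
qed

lemma left_stretch_ode_unique:
  assumes t: "t \<in> {t0..t1}" and N0: "transpose (N' t t) = mat 1"
    and dN: "\<And>\<tau>. \<tau> \<in> {t0..t1} \<Longrightarrow> ((\<lambda>s. transpose (N' s t)) has_vector_derivative
               - (R \<tau> t ** strain_rate (L \<tau>) ** R t \<tau>) ** transpose (N' \<tau> t)) (at \<tau> within {t0..t1})"
    and \<tau>: "\<tau> \<in> {t0..t1}"
  shows "N' \<tau> t = F \<tau> t ** R t \<tau>"
proof -
  have "transpose (N' \<tau> t) = transpose (F \<tau> t ** R t \<tau>)"
  proof (rule matrix_ode_solution_unique[OF t01_le _ dN left_stretch_transpose_derivative[OF _ t]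
        t _ \<tau>])
    show "continuous_on {t0..t1} (\<lambda>s. - (R s t ** strain_rate (L s) ** R t s))"
      using propagator_lower_derivative[OF t01_le spin_continuous R _ t] propagatorD(2)[OF R t]
      by (intro continuous_intros L continuous_on_vector_derivative) auto
    show "transpose (N' t t) = transpose (F t t ** R t t)"
      using N0 propagatorD(1)[OF R t] propagatorD(1)[OF F t] by simp
  qed
  then show ?thesis by simp
qed

end

theorem theorem2:
  fixes v :: "real^3 \<Rightarrow> real \<Rightarrow> real^3"
    and G :: "real^3 \<Rightarrow> real \<Rightarrow> mat3"
    and U :: "((real^3) \<times> real) set"
    and x :: "real \<Rightarrow> real^3"
    and F :: "real \<Rightarrow> real \<Rightarrow> mat3"
    and t0 t1 :: real
  defines "I \<equiv> {t0..t1}"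
  assumes t01: "t0 < t1"
    and U_open: "open U"
    and v_diff: "\<And>y t. (y, t) \<in> U \<Longrightarrow> ((\<lambda>z. v z t) has_derivative (\<lambda>h. G y t *v h)) (at y)"
    and G_cont: "continuous_on U (\<lambda>(y, t). G y t)"
    and v_cont: "continuous_on U (\<lambda>(y, t). v y t)"
    and x_in: "\<And>t. t \<in> I \<Longrightarrow> (x t, t) \<in> U"
    and x_traj: "\<And>t. t \<in> I \<Longrightarrow> (x has_vector_derivative v (x t) t) (at t within I)"
    and F_ode: "\<And>\<tau> t. \<tau> \<in> I \<Longrightarrow> t \<in> I \<Longrightarrow>
                  ((\<lambda>s. F \<tau> s) has_vector_derivative (G (x t) t ** F \<tau> t)) (at t within I)"
    and F_init: "\<And>\<tau>. \<tau> \<in> I \<Longrightarrow> F \<tau> \<tau> = mat 1"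
  shows "\<exists>R M N.
     \<comment> \<open>(i) decomposition, and its uniqueness\<close>
     OMN_decomp I F R M N
   \<and> (\<forall>R' M' N'. OMN_decomp I F R' M' N' \<longrightarrow>
        (\<forall>\<tau>\<in>I. \<forall>t\<in>I. R' \<tau> t = R \<tau> t \<and> M' \<tau> t = M \<tau> t \<and> N' \<tau> t = N \<tau> t))
     \<comment> \<open>(ii)\<close>
   \<and> (\<forall>\<tau>\<in>I. \<forall>t\<in>I.
        invertible (M \<tau> t) \<and> invertible (N \<tau> t)
      \<and> N \<tau> t = matrix_inv (M t \<tau>)
      \<and> same_singular_values (M \<tau> t) (F \<tau> t)
      \<and> same_singular_values (N \<tau> t) (F \<tau> t)
      \<and> transpose (M \<tau> t) ** M \<tau> t = transpose (F \<tau> t) ** F \<tau> t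
      \<and> N \<tau> t ** transpose (N \<tau> t) = F \<tau> t ** transpose (F \<tau> t))
     \<comment> \<open>(iii) the factors solve the ODEs ...\<close>
   \<and> (\<forall>\<tau>\<in>I. R \<tau> \<tau> = mat 1 \<and> M \<tau> \<tau> = mat 1 \<and> transpose (N \<tau> \<tau>) = mat 1)
   \<and> (\<forall>\<tau>\<in>I. \<forall>t\<in>I.
        ((\<lambda>s. R \<tau> s) has_vector_derivative (spin (G (x t) t) ** R \<tau> t)) (at t within I)
      \<and> ((\<lambda>s. M \<tau> s) has_vector_derivative
            ((R t \<tau> ** strain_rate (G (x t) t) ** R \<tau> t) ** M \<tau> t)) (at t within I)
      \<and> ((\<lambda>s. transpose (N s t)) has_vector_derivative
            (- (R \<tau> t ** strain_rate (G (x \<tau>) \<tau>) ** R t \<tau>) ** transpose (N \<tau> t))) (at \<tau> within I))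
     \<comment> \<open>... and are the unique solutions\<close>
   \<and> (\<forall>R'. (\<forall>\<tau>\<in>I. R' \<tau> \<tau> = mat 1) \<and>
           (\<forall>\<tau>\<in>I. \<forall>t\<in>I. ((\<lambda>s. R' \<tau> s) has_vector_derivative
                (spin (G (x t) t) ** R' \<tau> t)) (at t within I))
         \<longrightarrow> (\<forall>\<tau>\<in>I. \<forall>t\<in>I. R' \<tau> t = R \<tau> t))
   \<and> (\<forall>M'. (\<forall>\<tau>\<in>I. M' \<tau> \<tau> = mat 1) \<and>
           (\<forall>\<tau>\<in>I. \<forall>t\<in>I. ((\<lambda>s. M' \<tau> s) has_vector_derivative
                ((R t \<tau> ** strain_rate (G (x t) t) ** R \<tau> t) ** M' \<tau> t)) (at t within I))
         \<longrightarrow> (\<forall>\<tau>\<in>I. \<forall>t\<in>I. M' \<tau> t = M \<tau> t))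
   \<and> (\<forall>N'. (\<forall>t\<in>I. transpose (N' t t) = mat 1) \<and>
           (\<forall>\<tau>\<in>I. \<forall>t\<in>I. ((\<lambda>s. transpose (N' s t)) has_vector_derivative
                (- (R \<tau> t ** strain_rate (G (x \<tau>) \<tau>) ** R t \<tau>) ** transpose (N' \<tau> t))) (at \<tau> within I))
         \<longrightarrow> (\<forall>\<tau>\<in>I. \<forall>t\<in>I. N' \<tau> t = N \<tau> t))"
proof -
  let ?L = "\<lambda>t. G (x t) t"
  have "continuous_on I (\<lambda>t. (x t, t))"
    by (intro continuous_intros continuous_on_vector_derivative[OF x_traj])
  moreover have "(\<lambda>t. (x t, t)) ` I \<subseteq> U" using x_in by auto
  ultimately have L: "continuous_on {t0..t1} ?L"
    using continuous_on_compose2[OF G_cont] unfolding I_def by fastforce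
  have F: "propagator {t0..t1} ?L F"
    using F_ode F_init unfolding propagator_def I_def by blast
  obtain R where R: "propagator {t0..t1} (\<lambda>t. spin (?L t)) R"
    using propagator_exists[OF _ continuous_on_spin[OF L]] t01 by auto
  interpret spin_frame t0 t1 ?L F R
    using t01 L F R by unfold_locales
  show ?thesis
    unfolding I_def
    apply (rule exI[of _ R], rule exI[of _ "\<lambda>\<tau> t. R t \<tau> ** F \<tau> t"],
        rule exI[of _ "\<lambda>\<tau> t. F \<tau> t ** R t \<tau>"], intro conjI)
    subgoal by (rule OMN_decomp_stretches)
    subgoal using OMN_decomp_unique by blast
    subgoal using stretch_properties by simp
    subgoal using propagatorD(1)[OF R] propagatorD(1)[OF F] by simp
    subgoal using propagatorD(2)[OF R] stretch_derivative left_stretch_transpose_derivative by blast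
    subgoal using propagator_unique[OF t01_le spin_continuous R] unfolding propagator_def by blast
    subgoal using stretch_ode_unique by blast
    subgoal using left_stretch_ode_unique by blast
    done
qed

end
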